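(* Let $S=\{(X_m,y_m)\}_{m=1}^T\in\mathcal{S}_T$, let $\tau(1),\tau(2),\dots$ be i.i.d. uniform on $\{1,\dots,T\}$, and let $\bar w_k=\frac1k\sum_{t=1}^k w_t$. Then for every $k\ge1$, $$\mathbb{E}_\tau\Big[\frac1T\sum_{m=1}^T\|X_m\bar w_k-y_m\|^2\Big]\le\mathbb{E}_\tau\Big[\frac1T\sum_{m=1}^T\|(I-P_m)(\bar w_k-w^\star)\|^2\Big]\le\frac1k.$$
   Context: Let $d\ge 1$, $T\ge1$. A task is a pair $(X_m,y_m)$ with $X_m\in\mathbb{R}^{n_m\times d}$, $y_m\in\mathbb{R}^{n_m}$ and $\operatorname{rank}(X_m)<d$. $\mathcal{S}_T$ denotes the set of collections $S=\{(X_m,y_m)\}_{m=1}^T$ of $T$ tasks such that $\|X_m\|\le 1$ (spectral norm) for all $m$ and there exists $w\in\mathbb{R}^d$ with $\|w\|\le 1$ and $y_m=X_mw$ for all $m$. Given $S$ and an ordering $\tau:\mathbb{N}^+\to\{1,\dots,T\}$, the iterates are $w_0=0$ and $w_t=w_{t-1}+X_{\tau(t)}^+(y_{\tau(t)}-X_{\tau(t)}w_{t-1})$, with $A^+$ the Moore–Penrose pseudoinverse. $w^\star$ denotes the minimum Euclidean-norm vector with $X_mw^\star=y_m$ for all $m$. $P_m=I-X_m^+X_m$ is the orthogonal projection onto $\ker X_m$. *)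

theory Defs
  imports "Jordan_Normal_Form.DL_Rank" "HOL-Probability.Product_PMF"
begin

definition sqnorm :: "real Matrix.vec \<Rightarrow> real" where
  "sqnorm v = scalar_prod v v"

definition spec_norm :: "real mat \<Rightarrow> real" where
  "spec_norm A = Sup {sqrt (sqnorm (A *\<^sub>v v)) | v. v \<in> carrier_vec (dim_col A) \<and> sqrt (sqnorm v) \<le> 1}"

definition is_pinv :: "real mat \<Rightarrow> real mat \<Rightarrow> bool" where
  "is_pinv A B \<longleftrightarrow> B \<in> carrier_mat (dim_col A) (dim_row A) \<and>
     A * B * A = A \<and> B * A * B = B \<and>
     transpose_mat (A * B) = A * B \<and> transpose_mat (B * A) = B * A"

definition pinv :: "real mat \<Rightarrow> real mat" where
  "pinv A = (THE B. is_pinv A B)"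

definition kerproj :: "real mat \<Rightarrow> real mat" where
  "kerproj A = 1\<^sub>m (dim_col A) - pinv A * A"

definition in_S :: "nat \<Rightarrow> nat \<Rightarrow> (nat \<Rightarrow> real mat) \<Rightarrow> (nat \<Rightarrow> real Matrix.vec) \<Rightarrow> bool" where
  "in_S d T X y \<longleftrightarrow>
     (\<forall>m\<in>{1..T}. dim_col (X m) = d \<and> dim_vec (y m) = dim_row (X m)
                  \<and> vec_space.rank (dim_row (X m)) (X m) < d
                  \<and> spec_norm (X m) \<le> 1) \<and>
     (\<exists>w\<in>carrier_vec d. sqrt (sqnorm w) \<le> 1 \<and> (\<forall>m\<in>{1..T}. X m *\<^sub>v w = y m))"

fun iter :: "nat \<Rightarrow> (nat \<Rightarrow> real mat) \<Rightarrow> (nat \<Rightarrow> real Matrix.vec) \<Rightarrow> (nat \<Rightarrow> nat) \<Rightarrow> nat \<Rightarrow> real Matrix.vec" where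
  "iter d X y \<tau> 0 = 0\<^sub>v d"
| "iter d X y \<tau> (Suc t) =
     iter d X y \<tau> t + pinv (X (\<tau> (Suc t))) *\<^sub>v (y (\<tau> (Suc t)) - X (\<tau> (Suc t)) *\<^sub>v iter d X y \<tau> t)"

definition wbar :: "nat \<Rightarrow> (nat \<Rightarrow> real mat) \<Rightarrow> (nat \<Rightarrow> real Matrix.vec) \<Rightarrow> (nat \<Rightarrow> nat) \<Rightarrow> nat \<Rightarrow> real Matrix.vec" where
  "wbar d X y \<tau> k = (1 / real k) \<cdot>\<^sub>v finsum_vec TYPE(real) d (\<lambda>t. iter d X y \<tau> t) {1..k}"

definition wstar :: "nat \<Rightarrow> nat \<Rightarrow> (nat \<Rightarrow> real mat) \<Rightarrow> (nat \<Rightarrow> real Matrix.vec) \<Rightarrow> real Matrix.vec" where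
  "wstar d T X y = (THE w. w \<in> carrier_vec d \<and> (\<forall>m\<in>{1..T}. X m *\<^sub>v w = y m) \<and>
      (\<forall>v\<in>carrier_vec d. (\<forall>m\<in>{1..T}. X m *\<^sub>v v = y m) \<longrightarrow> sqnorm w \<le> sqnorm v))"

text \<open>Distribution of the ordering tau restricted to 1..k: i.i.d. uniform on 1..T
  (values outside 1..k are irrelevant for the first k iterates and set to 1).\<close>
definition tau_pmf :: "nat \<Rightarrow> nat \<Rightarrow> (nat \<Rightarrow> nat) pmf" where
  "tau_pmf T k = Pi_pmf {1..k} 1 (\<lambda>_. pmf_of_set {1..T})"

end

theory Submission
  imports Defs
begin

text \<open>
  Let \<open>e\<^sub>t = w\<^sub>t - w\<^sup>*\<close>. Because \<open>w\<^sup>*\<close> solves every task, a Kaczmarz step projects the error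
  orthogonally onto \<open>ker X\<^sub>m\<close>, \<open>m = \<tau>(t)\<close>, hence
  \<open>\<parallel>e\<^sub>t\<^sub>-\<^sub>1\<parallel>\<^sup>2 = \<parallel>e\<^sub>t\<parallel>\<^sup>2 + \<parallel>(I - P\<^sub>m) e\<^sub>t\<^sub>-\<^sub>1\<parallel>\<^sup>2\<close>. Since \<open>\<tau>(t)\<close> is uniform and independent
  of \<open>e\<^sub>t\<^sub>-\<^sub>1\<close>, the last term has expectation \<open>E g(e\<^sub>t\<^sub>-\<^sub>1)\<close> with
  \<open>g(e) = (1/T) \<Sum>\<^sub>m \<parallel>(I - P\<^sub>m) e\<parallel>\<^sup>2\<close>. Telescoping and \<open>g(e) \<le> \<parallel>e\<parallel>\<^sup>2\<close> give
  \<open>\<Sum>\<^sub>t\<^sub>=\<^sub>1\<^sup>k E g(e\<^sub>t) \<le> \<parallel>e\<^sub>0\<parallel>\<^sup>2 = \<parallel>w\<^sup>*\<parallel>\<^sup>2 \<le> 1\<close>, and by convexity of \<open>g\<close> the bound passes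
  to the averaged iterate. The first inequality holds pointwise because \<open>X\<^sub>m = X\<^sub>m (I - P\<^sub>m)\<close>
  and \<open>\<parallel>X\<^sub>m\<parallel> \<le> 1\<close>.
\<close>

unbundle no vec_syntax
unbundle no inner_syntax

section \<open>Squared norms and orthogonal projections\<close>

lemma sqnorm_nonneg: "0 \<le> sqnorm (v :: real Matrix.vec)"
  unfolding sqnorm_def scalar_prod_def by (auto intro: sum_nonneg)

lemma sqnorm_eq_0_iff:
  "(v :: real Matrix.vec) \<in> carrier_vec n \<Longrightarrow> sqnorm v = 0 \<longleftrightarrow> v = 0\<^sub>v n"
  using conjugate_square_eq_0_vec[of v n] unfolding sqnorm_def by simp

lemma mult_mat_zero_vec [simp]: "A \<in> carrier_mat n m \<Longrightarrow> A *\<^sub>v 0\<^sub>v m = 0\<^sub>v n"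
  by (intro eq_vecI) auto

lemma sqnorm_add:
  fixes a b :: "real Matrix.vec"
  assumes "a \<in> carrier_vec n" "b \<in> carrier_vec n"
  shows "sqnorm (a + b) = sqnorm a + 2 * (a \<bullet> b) + sqnorm b"
  using assms by (simp add: sqnorm_def add_scalar_prod_distrib[of _ n] scalar_prod_add_distrib[of _ n]
      comm_scalar_prod[of b n a])

lemma sqnorm_smult: "sqnorm (c \<cdot>\<^sub>v (v :: real Matrix.vec)) = c\<^sup>2 * sqnorm v"
  unfolding sqnorm_def scalar_prod_def by (simp add: sum_distrib_left power2_eq_square algebra_simps)

lemma sqnorm_orthogonal_projection:
  fixes P :: "real mat"
  assumes P: "P \<in> carrier_mat d d" and sym: "P\<^sup>T = P" and idem: "P * P = P"
    and v: "v \<in> carrier_vec d"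
  shows "sqnorm v = sqnorm (P *\<^sub>v v) + sqnorm (v - P *\<^sub>v v)"
proof -
  define a where "a = P *\<^sub>v v"
  define b where "b = v - a"
  have a: "a \<in> carrier_vec d" and b: "b \<in> carrier_vec d" unfolding a_def b_def using P v by auto
  have "P *\<^sub>v b = P *\<^sub>v v - (P * P) *\<^sub>v v"
    unfolding b_def a_def using mult_minus_distrib_mat_vec[OF P v] P v by simp
  then have Pb: "P *\<^sub>v b = 0\<^sub>v d" using idem P v by simp
  have "a \<bullet> b = v \<bullet> (P *\<^sub>v b)"
    unfolding a_def using transpose_vec_mult_scalar[OF P b v] sym by simp
  then have "a \<bullet> b = 0" using Pb v by simp
  moreover have "v = a + b" unfolding b_def using a v by auto
  ultimately show ?thesis using sqnorm_add[OF a b] unfolding a_def b_def by simp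
qed

lemma sqnorm_orthogonal_projection_le:
  fixes P :: "real mat"
  assumes "P \<in> carrier_mat d d" "P\<^sup>T = P" "P * P = P" "v \<in> carrier_vec d"
  shows "sqnorm (P *\<^sub>v v) \<le> sqnorm v"
  using sqnorm_orthogonal_projection[OF assms] sqnorm_nonneg[of "v - P *\<^sub>v v"] by simp

section \<open>The spectral norm\<close>

lemma spec_norm_upper:
  fixes A :: "real mat"
  assumes A: "A \<in> carrier_mat n d" and v: "v \<in> carrier_vec d" "sqrt (sqnorm v) \<le> 1"
  shows "sqrt (sqnorm (A *\<^sub>v v)) \<le> spec_norm A"
proof -
  let ?S = "{sqrt (sqnorm (A *\<^sub>v u)) | u. u \<in> carrier_vec (dim_col A) \<and> sqrt (sqnorm u) \<le> 1}"
  define K where "K = sqrt (\<Sum>i\<in>{0..<n}. (\<Sum>j\<in>{0..<d}. \<bar>A $$ (i, j)\<bar>)\<^sup>2)"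
  have bound: "sqrt (sqnorm (A *\<^sub>v u)) \<le> K"
    if u: "u \<in> carrier_vec d" "sqrt (sqnorm u) \<le> 1" for u
  proof -
    have entries: "\<bar>u $ j\<bar> \<le> 1" if "j < d" for j
    proof -
      have "(u $ j)\<^sup>2 \<le> sqnorm u"
        using that u by (auto simp: sqnorm_def scalar_prod_def power2_eq_square intro: member_le_sum)
      then show ?thesis using u(2) abs_le_square_iff[of "u $ j" 1] by simp
    qed
    then have "\<bar>(A *\<^sub>v u) $ i\<bar> \<le> (\<Sum>j\<in>{0..<d}. \<bar>A $$ (i, j)\<bar>)" if i: "i < n" for i
    proof -
      have "\<bar>(A *\<^sub>v u) $ i\<bar> \<le> (\<Sum>j\<in>{0..<d}. \<bar>A $$ (i, j) * u $ j\<bar>)"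
        using i A u by (simp add: scalar_prod_def sum_abs)
      also have "\<dots> \<le> (\<Sum>j\<in>{0..<d}. \<bar>A $$ (i, j)\<bar>)"
        using entries by (intro sum_mono) (simp add: abs_mult mult_left_le)
      finally show ?thesis .
    qed
    then have "((A *\<^sub>v u) $ i)\<^sup>2 \<le> (\<Sum>j\<in>{0..<d}. \<bar>A $$ (i, j)\<bar>)\<^sup>2" if "i < n" for i
      using that by (metis abs_ge_zero power2_abs power_mono)
    then have "sqnorm (A *\<^sub>v u) \<le> (\<Sum>i\<in>{0..<n}. (\<Sum>j\<in>{0..<d}. \<bar>A $$ (i, j)\<bar>)\<^sup>2)"
      using A by (auto simp: sqnorm_def scalar_prod_def power2_eq_square intro!: sum_mono)
    then show ?thesis by (simp add: K_def)
  qed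
  have "bdd_above ?S" using A bound by (intro bdd_aboveI[of _ K]) auto
  moreover have "sqrt (sqnorm (A *\<^sub>v v)) \<in> ?S" using A v by auto
  ultimately show ?thesis unfolding spec_norm_def by (rule cSup_upper[rotated])
qed

lemma sqrt_sqnorm_mult_mat_vec_le:
  fixes A :: "real mat"
  assumes A: "A \<in> carrier_mat n d" and u: "u \<in> carrier_vec d"
  shows "sqrt (sqnorm (A *\<^sub>v u)) \<le> spec_norm A * sqrt (sqnorm u)"
proof (cases "u = 0\<^sub>v d")
  case True
  then show ?thesis using A by (simp add: sqnorm_def)
next
  case False
  define c where "c = sqrt (sqnorm u)"
  have c: "c > 0" using False sqnorm_eq_0_iff[OF u] sqnorm_nonneg[of u] by (simp add: c_def)
  have scale: "sqrt (sqnorm ((1 / c) \<cdot>\<^sub>v w)) = sqrt (sqnorm w) / c" for w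
    using c by (simp add: sqnorm_smult real_sqrt_divide power_divide)
  have "sqrt (sqnorm (A *\<^sub>v ((1 / c) \<cdot>\<^sub>v u))) \<le> spec_norm A"
    using spec_norm_upper[OF A] u scale[of u] c by (simp add: c_def)
  moreover have "A *\<^sub>v ((1 / c) \<cdot>\<^sub>v u) = (1 / c) \<cdot>\<^sub>v (A *\<^sub>v u)" using mult_mat_vec[OF A u] .
  ultimately show ?thesis using c scale by (simp add: c_def divide_le_eq mult.commute)
qed

section \<open>Averages of vectors\<close>

definition mean_vec :: "nat \<Rightarrow> 'a set \<Rightarrow> ('a \<Rightarrow> real Matrix.vec) \<Rightarrow> real Matrix.vec" where
  "mean_vec n I a = Matrix.vec n (\<lambda>i. (\<Sum>t\<in>I. a t $ i) / real (card I))"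

lemma mult_mat_vec_mean_vec:
  fixes P :: "real mat"
  assumes P: "P \<in> carrier_mat m n" and a: "\<And>t. t \<in> I \<Longrightarrow> a t \<in> carrier_vec n"
  shows "P *\<^sub>v mean_vec n I a = mean_vec m I (\<lambda>t. P *\<^sub>v a t)"
proof (rule eq_vecI)
  fix i assume "i < dim_vec (mean_vec m I (\<lambda>t. P *\<^sub>v a t))"
  then have i: "i < m" by (simp add: mean_vec_def)
  have "(P *\<^sub>v mean_vec n I a) $ i = (\<Sum>t\<in>I. \<Sum>j\<in>{0..<n}. P $$ (i, j) * a t $ j) / real (card I)"
    using i P by (simp add: mean_vec_def scalar_prod_def sum_distrib_left sum.swap[of _ I] flip: sum_divide_distrib)
  also have "(\<Sum>t\<in>I. \<Sum>j\<in>{0..<n}. P $$ (i, j) * a t $ j) = (\<Sum>t\<in>I. (P *\<^sub>v a t) $ i)"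
  proof (rule sum.cong)
    fix t assume "t \<in> I"
    then show "(\<Sum>j\<in>{0..<n}. P $$ (i, j) * a t $ j) = (P *\<^sub>v a t) $ i"
      using a[of t] i P by (auto simp: scalar_prod_def)
  qed simp
  finally show "(P *\<^sub>v mean_vec n I a) $ i = mean_vec m I (\<lambda>t. P *\<^sub>v a t) $ i"
    using i by (simp add: mean_vec_def)
qed (use P in \<open>simp add: mean_vec_def\<close>)

lemma sqnorm_mean_vec_le:
  assumes a: "\<And>t. t \<in> I \<Longrightarrow> a t \<in> carrier_vec n"
  shows "sqnorm (mean_vec n I a) \<le> (\<Sum>t\<in>I. sqnorm (a t)) / real (card I)"
proof -
  have component: "((\<Sum>t\<in>I. a t $ i) / real (card I))\<^sup>2 \<le> (\<Sum>t\<in>I. (a t $ i)\<^sup>2) / real (card I)" for i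
  proof (cases "card I = 0")
    case False
    then have c: "real (card I) > 0" by simp
    have "((\<Sum>t\<in>I. a t $ i) / real (card I))\<^sup>2 = (\<Sum>t\<in>I. a t $ i)\<^sup>2 / (real (card I))\<^sup>2"
      by (simp add: power_divide)
    also have "\<dots> \<le> ((\<Sum>t\<in>I. (a t $ i)\<^sup>2) * real (card I)) / (real (card I))\<^sup>2"
      using sum_squared_le_sum_of_squares[of "\<lambda>t. a t $ i" I] by (intro divide_right_mono) auto
    also have "\<dots> = (\<Sum>t\<in>I. (a t $ i)\<^sup>2) / real (card I)" using c by (simp add: power2_eq_square)
    finally show ?thesis .
  qed simp
  have "sqnorm (mean_vec n I a) = (\<Sum>i\<in>{0..<n}. ((\<Sum>t\<in>I. a t $ i) / real (card I))\<^sup>2)"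
    by (simp add: mean_vec_def sqnorm_def scalar_prod_def power2_eq_square)
  also have "\<dots> \<le> (\<Sum>i\<in>{0..<n}. (\<Sum>t\<in>I. (a t $ i)\<^sup>2) / real (card I))"
    by (intro sum_mono component)
  also have "\<dots> = (\<Sum>t\<in>I. \<Sum>i\<in>{0..<n}. (a t $ i)\<^sup>2) / real (card I)"
    by (subst sum.swap) (simp add: sum_divide_distrib)
  also have "(\<Sum>t\<in>I. \<Sum>i\<in>{0..<n}. (a t $ i)\<^sup>2) = (\<Sum>t\<in>I. sqnorm (a t))"
  proof (rule sum.cong)
    fix t assume "t \<in> I"
    then show "(\<Sum>i\<in>{0..<n}. (a t $ i)\<^sup>2) = sqnorm (a t)"
      using a[of t] by (auto simp: sqnorm_def scalar_prod_def power2_eq_square)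
  qed simp
  finally show ?thesis .
qed

section \<open>The Moore--Penrose pseudoinverse\<close>

lemma is_pinv_mult_right_eq:
  fixes A B C :: "real mat"
  assumes A: "A \<in> carrier_mat n m" and B: "is_pinv A B" and C: "is_pinv A C"
  shows "A * B = A * C"
proof -
  have Bc: "B \<in> carrier_mat m n" and ABA: "A * B * A = A" and sym_AB: "(A * B)\<^sup>T = A * B"
    using A B by (auto simp: is_pinv_def)
  have Cc: "C \<in> carrier_mat m n" and ACA: "A * C * A = A" and sym_AC: "(A * C)\<^sup>T = A * C"
    using A C by (auto simp: is_pinv_def)
  have At: "A\<^sup>T \<in> carrier_mat m n" and Bt: "B\<^sup>T \<in> carrier_mat n m"
    and AC: "A * C \<in> carrier_mat n n" using A Bc Cc by auto
  have "A * B = B\<^sup>T * A\<^sup>T" using sym_AB transpose_mult[OF A Bc] by simp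
  also have "A\<^sup>T = (A * C * A)\<^sup>T" using ACA by simp
  also have "\<dots> = A\<^sup>T * (A * C)" using transpose_mult[of "A * C" n n A m] A Cc sym_AC by simp
  also have "B\<^sup>T * (A\<^sup>T * (A * C)) = (A * B)\<^sup>T * (A * C)"
    using transpose_mult[OF A Bc] assoc_mult_mat[OF Bt At AC] by simp
  also have "\<dots> = (A * B * A) * C" using sym_AB assoc_mult_mat[of "A * B" n n A m C n] A Bc Cc by simp
  also have "\<dots> = A * C" using ABA by simp
  finally show ?thesis .
qed

lemma is_pinv_mult_left_eq:
  fixes A B C :: "real mat"
  assumes A: "A \<in> carrier_mat n m" and B: "is_pinv A B" and C: "is_pinv A C"
  shows "B * A = C * A"
proof -
  have Bc: "B \<in> carrier_mat m n" and ABA: "A * B * A = A" and sym_BA: "(B * A)\<^sup>T = B * A"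
    using A B by (auto simp: is_pinv_def)
  have Cc: "C \<in> carrier_mat m n" and ACA: "A * C * A = A" and sym_CA: "(C * A)\<^sup>T = C * A"
    using A C by (auto simp: is_pinv_def)
  have At: "A\<^sup>T \<in> carrier_mat m n" and Bt: "B\<^sup>T \<in> carrier_mat n m"
    and CA: "C * A \<in> carrier_mat m m" and BA: "B * A \<in> carrier_mat m m" using A Bc Cc by auto
  have "B * A = A\<^sup>T * B\<^sup>T" using sym_BA transpose_mult[OF Bc A] by simp
  also have "A\<^sup>T = (A * (C * A))\<^sup>T" using ACA A Cc by simp
  also have "\<dots> = (C * A) * A\<^sup>T" using transpose_mult[OF A CA] sym_CA by simp
  also have "C * A * A\<^sup>T * B\<^sup>T = (C * A) * (B * A)"
    using assoc_mult_mat[OF CA At Bt] transpose_mult[OF Bc A] sym_BA by simp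
  also have "\<dots> = C * ((A * B) * A)" using assoc_mult_mat[OF Cc A BA] assoc_mult_mat[OF A Bc A] by simp
  also have "\<dots> = C * A" using ABA by simp
  finally show ?thesis .
qed

lemma is_pinv_unique:
  fixes A B C :: "real mat"
  assumes A: "A \<in> carrier_mat n m" and B: "is_pinv A B" and C: "is_pinv A C"
  shows "B = C"
proof -
  have Bc: "B \<in> carrier_mat m n" and BAB: "B * A * B = B" using A B by (auto simp: is_pinv_def)
  have Cc: "C \<in> carrier_mat m n" and CAC: "C * A * C = C" using A C by (auto simp: is_pinv_def)
  have "B = B * (A * B)" using BAB A Bc by simp
  also have "\<dots> = (B * A) * C" using is_pinv_mult_right_eq[OF A B C] A Bc Cc by simp
  also have "\<dots> = C" using is_pinv_mult_left_eq[OF A B C] CAC by simp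
  finally show ?thesis .
qed

lemma is_pinv_mult:
  fixes B C Bl Cr :: "real mat"
  assumes B: "B \<in> carrier_mat n r" and C: "C \<in> carrier_mat r m"
    and Bl: "Bl \<in> carrier_mat r n" and Cr: "Cr \<in> carrier_mat m r"
    and left: "Bl * B = 1\<^sub>m r" and right: "C * Cr = 1\<^sub>m r"
    and sym_B: "(B * Bl)\<^sup>T = B * Bl" and sym_C: "(Cr * C)\<^sup>T = Cr * C"
  shows "is_pinv (B * C) (Cr * Bl)"
proof -
  have P: "Cr * Bl \<in> carrier_mat m n" and A: "B * C \<in> carrier_mat n m" using B C Bl Cr by auto
  have AP: "B * C * (Cr * Bl) = B * Bl"
  proof -
    have "B * C * (Cr * Bl) = B * ((C * Cr) * Bl)"
      using assoc_mult_mat[OF B C P] assoc_mult_mat[OF C Cr Bl] by simp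
    then show ?thesis using right Bl by simp
  qed
  have PA: "Cr * Bl * (B * C) = Cr * C"
  proof -
    have "Cr * Bl * (B * C) = Cr * ((Bl * B) * C)"
      using assoc_mult_mat[OF Cr Bl A] assoc_mult_mat[OF Bl B C] by simp
    then show ?thesis using left C by simp
  qed
  have "B * C * (Cr * Bl) * (B * C) = B * (Bl * (B * C))"
    unfolding AP using assoc_mult_mat[OF B Bl A] .
  also have "\<dots> = B * ((Bl * B) * C)" using assoc_mult_mat[OF Bl B C] by simp
  also have "\<dots> = B * C" using left C by simp
  finally have APA: "B * C * (Cr * Bl) * (B * C) = B * C" .
  have "Cr * Bl * (B * C) * (Cr * Bl) = Cr * (C * (Cr * Bl))"
    unfolding PA using assoc_mult_mat[OF Cr C P] .
  also have "\<dots> = Cr * ((C * Cr) * Bl)" using assoc_mult_mat[OF C Cr Bl] by simp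
  also have "\<dots> = Cr * Bl" using right Bl by simp
  finally have PAP: "Cr * Bl * (B * C) * (Cr * Bl) = Cr * Bl" .
  show ?thesis unfolding is_pinv_def using P B C APA PAP AP PA sym_B sym_C by simp
qed

lemma gram_mat_inverse:
  fixes B :: "real mat"
  assumes B: "B \<in> carrier_mat n r"
    and inj: "\<And>v. v \<in> carrier_vec r \<Longrightarrow> B *\<^sub>v v = 0\<^sub>v n \<Longrightarrow> v = 0\<^sub>v r"
  obtains L where "L \<in> carrier_mat r r" "L * (B\<^sup>T * B) = 1\<^sub>m r" "(B\<^sup>T * B) * L = 1\<^sub>m r" "L\<^sup>T = L"
proof -
  let ?G = "B\<^sup>T * B"
  have G: "?G \<in> carrier_mat r r" using B by simp
  have "v = 0\<^sub>v r" if v: "v \<in> carrier_vec r" and Gv: "?G *\<^sub>v v = 0\<^sub>v r" for v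
  proof -
    have "sqnorm (B *\<^sub>v v) = (B\<^sup>T *\<^sub>v (B *\<^sub>v v)) \<bullet> v"
      using transpose_vec_mult_scalar[OF B v, of "B *\<^sub>v v"] B v by (simp add: sqnorm_def)
    also have "B\<^sup>T *\<^sub>v (B *\<^sub>v v) = 0\<^sub>v r" using Gv B v by simp
    finally have "sqnorm (B *\<^sub>v v) = 0" using v by simp
    then show ?thesis using inj[OF v] sqnorm_eq_0_iff[of "B *\<^sub>v v" n] B v by simp
  qed
  then have "Determinant.det ?G \<noteq> 0" using det_0_iff_vec_prod_zero[OF G] by auto
  from det_non_zero_imp_unit[OF G this, of undefined]
  obtain L where L: "L \<in> carrier_mat r r" and LG: "L * ?G = 1\<^sub>m r" and GL: "?G * L = 1\<^sub>m r"
    unfolding Units_def ring_mat_def by auto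
  have sym_G: "?G\<^sup>T = ?G" using transpose_mult[of "B\<^sup>T" r n B r] B by simp
  have "L\<^sup>T * ?G = 1\<^sub>m r" using transpose_mult[OF G L] GL sym_G by simp
  then have "L\<^sup>T = L"
    using assoc_mult_mat[of "L\<^sup>T" r r ?G r L r] L G GL by simp
  with L LG GL that show ?thesis by blast
qed

lemma is_pinv_exists_full_rank:
  fixes B C :: "real mat"
  assumes B: "B \<in> carrier_mat n r" and C: "C \<in> carrier_mat r m"
    and inj_B: "\<And>v. v \<in> carrier_vec r \<Longrightarrow> B *\<^sub>v v = 0\<^sub>v n \<Longrightarrow> v = 0\<^sub>v r"
    and inj_Ct: "\<And>v. v \<in> carrier_vec r \<Longrightarrow> C\<^sup>T *\<^sub>v v = 0\<^sub>v m \<Longrightarrow> v = 0\<^sub>v r"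
  shows "\<exists>P. is_pinv (B * C) P"
proof -
  obtain L where L: "L \<in> carrier_mat r r" and LG: "L * (B\<^sup>T * B) = 1\<^sub>m r" and sym_L: "L\<^sup>T = L"
    using gram_mat_inverse[OF B inj_B] by blast
  obtain K where K: "K \<in> carrier_mat r r" and GK: "(C * C\<^sup>T) * K = 1\<^sub>m r" and sym_K: "K\<^sup>T = K"
    using gram_mat_inverse[of "C\<^sup>T" m r] C inj_Ct by auto
  have "is_pinv (B * C) ((C\<^sup>T * K) * (L * B\<^sup>T))"
  proof (rule is_pinv_mult[OF B C])
    show "(L * B\<^sup>T) * B = 1\<^sub>m r" and "C * (C\<^sup>T * K) = 1\<^sub>m r"
      using LG GK B C L K by simp_all
    show "(B * (L * B\<^sup>T))\<^sup>T = B * (L * B\<^sup>T)"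
      using transpose_mult[of B n r "L * B\<^sup>T" n] transpose_mult[of L r r "B\<^sup>T" n] B L sym_L by simp
    show "((C\<^sup>T * K) * C)\<^sup>T = (C\<^sup>T * K) * C"
      using transpose_mult[of "C\<^sup>T * K" m r C m] transpose_mult[of "C\<^sup>T" m r K r] C K sym_K by simp
  qed (use B C L K in auto)
  then show ?thesis by blast
qed

lemma row_echelon_zero_rows:
  fixes R :: "'a :: semiring_1 mat"
  assumes R: "R \<in> carrier_mat nr nc" and f: "pivot_fun R f nc"
  obtains r where "r \<le> nr" "\<And>i. i < r \<Longrightarrow> f i < nc"
    "\<And>i j. r \<le> i \<Longrightarrow> i < nr \<Longrightarrow> j < nc \<Longrightarrow> R $$ (i, j) = 0"
proof -
  note piv = pivot_funD[OF carrier_matD(1)[OF R] f]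
  have stays: "f j = nc" if "i \<le> j" "j < nr" "f i = nc" for i j
    using that
  proof (induction j)
    case (Suc j)
    then show ?case using piv(1)[of "Suc j"] piv(3)[of j] by (cases "i = Suc j") auto
  qed simp
  define r where "r = (if \<exists>i<nr. f i = nc then LEAST i. i < nr \<and> f i = nc else nr)"
  have r: "r \<le> nr"
  proof (cases "\<exists>i<nr. f i = nc")
    case True
    then obtain i where "i < nr" "f i = nc" by blast
    then have "r \<le> i" unfolding r_def by (auto intro: Least_le)
    then show ?thesis using \<open>i < nr\<close> by simp
  qed (auto simp: r_def)
  have below: "f i < nc" if "i < r" for i
  proof -
    have "i < nr" "f i \<noteq> nc"
      using that r not_less_Least[of i "\<lambda>i. i < nr \<and> f i = nc"] unfolding r_def
      by (auto split: if_splits)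
    then show ?thesis using piv(1) by force
  qed
  have above: "f i = nc" if "r \<le> i" "i < nr" for i
  proof -
    have "\<exists>i<nr. f i = nc" using that unfolding r_def by (auto split: if_splits)
    then obtain i where "i < nr" "f i = nc" by blast
    then have "r < nr \<and> f r = nc"
      unfolding r_def using LeastI[of "\<lambda>i. i < nr \<and> f i = nc" i] by auto
    then show ?thesis using stays that by blast
  qed
  show ?thesis
  proof (rule that[OF r below])
    fix i j assume ij: "r \<le> i" "i < nr" "j < nc"
    then have "Matrix.row R i = 0\<^sub>v nc" using pivot_fun_zero_row_iff[OF f R] above by blast
    then show "R $$ (i, j) = 0" using ij R by (metis index_row(1) index_zero_vec(1) carrier_matD)
  qed
qed

definition first_cols :: "nat \<Rightarrow> 'a mat \<Rightarrow> 'a mat" where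
  "first_cols r A = Matrix.mat (dim_row A) r (\<lambda>(i, j). A $$ (i, j))"

definition first_rows :: "nat \<Rightarrow> 'a mat \<Rightarrow> 'a mat" where
  "first_rows r A = Matrix.mat r (dim_col A) (\<lambda>(i, j). A $$ (i, j))"

lemma mult_first_cols_first_rows:
  fixes Q R :: "'a :: semiring_0 mat"
  assumes Q: "Q \<in> carrier_mat n k" and R: "R \<in> carrier_mat k m" and r: "r \<le> k"
    and zero: "\<And>i j. r \<le> i \<Longrightarrow> i < k \<Longrightarrow> j < m \<Longrightarrow> R $$ (i, j) = 0"
  shows "Q * R = first_cols r Q * first_rows r R"
proof (rule eq_matI)
  fix i j
  assume "i < dim_row (first_cols r Q * first_rows r R)" "j < dim_col (first_cols r Q * first_rows r R)"
  then have ij: "i < n" "j < m" using Q R by (simp_all add: first_cols_def first_rows_def)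
  have "(Q * R) $$ (i, j) = (\<Sum>l\<in>{0..<k}. Q $$ (i, l) * R $$ (l, j))"
    using ij Q R by (simp add: scalar_prod_def)
  also have "\<dots> = (\<Sum>l\<in>{0..<r}. Q $$ (i, l) * R $$ (l, j))"
    using r zero ij by (intro sum.mono_neutral_right) auto
  finally show "(Q * R) $$ (i, j) = (first_cols r Q * first_rows r R) $$ (i, j)"
    using ij r Q R by (simp add: first_cols_def first_rows_def scalar_prod_def)
qed (use Q R in \<open>simp_all add: first_cols_def first_rows_def\<close>)

lemma first_cols_mult_vec_eq_0:
  fixes P Q :: "'a :: semiring_1 mat"
  assumes Q: "Q \<in> carrier_mat n n" and P: "P \<in> carrier_mat n n" and PQ: "P * Q = 1\<^sub>m n"
    and r: "r \<le> n" and v: "v \<in> carrier_vec r" and Qv: "first_cols r Q *\<^sub>v v = 0\<^sub>v n"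
  shows "v = 0\<^sub>v r"
proof -
  define u where "u = Matrix.vec n (\<lambda>i. if i < r then v $ i else 0)"
  have u: "u \<in> carrier_vec n" unfolding u_def by simp
  have Qu: "Q *\<^sub>v u = first_cols r Q *\<^sub>v v"
  proof (rule eq_vecI)
    fix i assume "i < dim_vec (first_cols r Q *\<^sub>v v)"
    then have i: "i < n" using Q by (simp add: first_cols_def)
    have "(Q *\<^sub>v u) $ i = (\<Sum>l\<in>{0..<n}. Q $$ (i, l) * u $ l)"
      using i Q u by (simp add: scalar_prod_def)
    also have "\<dots> = (\<Sum>l\<in>{0..<r}. Q $$ (i, l) * u $ l)"
      using r by (intro sum.mono_neutral_right) (auto simp: u_def)
    finally show "(Q *\<^sub>v u) $ i = (first_cols r Q *\<^sub>v v) $ i"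
      using i r v Q by (simp add: scalar_prod_def first_cols_def u_def)
  qed (use Q in \<open>simp add: first_cols_def\<close>)
  have "u = P *\<^sub>v (Q *\<^sub>v u)" using PQ P Q u by (simp flip: assoc_mult_mat_vec)
  then have "u = 0\<^sub>v n" using Qu Qv P by simp
  then have "v $ i = 0" if "i < r" for i
  proof -
    have "u $ i = 0" using \<open>u = 0\<^sub>v n\<close> that r by simp
    then show ?thesis using that r by (simp add: u_def)
  qed
  then show ?thesis using v by (intro eq_vecI) auto
qed

lemma transpose_first_rows_mult_vec_eq_0:
  fixes R :: "'a :: semiring_1 mat"
  assumes R: "R \<in> carrier_mat nr nc" and f: "pivot_fun R f nc" and r: "r \<le> nr"
    and piv: "\<And>i. i < r \<Longrightarrow> f i < nc"
    and v: "v \<in> carrier_vec r" and Rv: "(first_rows r R)\<^sup>T *\<^sub>v v = 0\<^sub>v nc"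
  shows "v = 0\<^sub>v r"
proof (rule eq_vecI)
  note pivot = pivot_funD[OF carrier_matD(1)[OF R] f]
  fix i assume "i < dim_vec (0\<^sub>v r)"
  then have i: "i < r" by simp
  then have fi: "f i < nc" by (rule piv)
  have "((first_rows r R)\<^sup>T *\<^sub>v v) $ f i = (\<Sum>l\<in>{0..<r}. R $$ (l, f i) * v $ l)"
    using fi R v by (simp add: scalar_prod_def first_rows_def)
  also have "\<dots> = (\<Sum>l\<in>{0..<r}. if l = i then v $ l else 0)"
    using pivot(4)[of i] pivot(5)[of i] i fi r by (intro sum.cong) auto
  also have "\<dots> = v $ i" using i by simp
  finally show "v $ i = 0\<^sub>v r $ i" using Rv fi i by simp
qed (use v in simp)

text \<open>The factors are read off the reduced row echelon form \<open>R = P A\<close>: the leading columns of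
  \<open>P\<^sup>-\<^sup>1\<close> and the nonzero rows of \<open>R\<close>.\<close>

lemma full_rank_factorization:
  fixes A :: "'a :: field mat"
  assumes A: "A \<in> carrier_mat nr nc"
  obtains B r C where "B \<in> carrier_mat nr r" "C \<in> carrier_mat r nc" "A = B * C"
    "\<And>v. v \<in> carrier_vec r \<Longrightarrow> B *\<^sub>v v = 0\<^sub>v nr \<Longrightarrow> v = 0\<^sub>v r"
    "\<And>v. v \<in> carrier_vec r \<Longrightarrow> C\<^sup>T *\<^sub>v v = 0\<^sub>v nc \<Longrightarrow> v = 0\<^sub>v r"
proof -
  obtain R Z where GJ: "gauss_jordan A (0\<^sub>m nr 0) = (R, Z)" by (cases "gauss_jordan A (0\<^sub>m nr 0)")
  obtain P where "P \<in> Units (ring_mat TYPE('a) nr undefined)" and RPA: "R = P * A"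
    using gauss_jordan_transform[OF A zero_carrier_mat GJ, of undefined] by blast
  then obtain Q where P: "P \<in> carrier_mat nr nr" and Q: "Q \<in> carrier_mat nr nr"
    and QP: "Q * P = 1\<^sub>m nr" and PQ: "P * Q = 1\<^sub>m nr"
    unfolding Units_def ring_mat_def by auto
  have R: "R \<in> carrier_mat nr nc" using RPA P A by simp
  obtain f where f: "pivot_fun R f nc"
    using gauss_jordan_row_echelon[OF A GJ] R unfolding row_echelon_form_def by auto
  obtain r where r: "r \<le> nr" and piv: "\<And>i. i < r \<Longrightarrow> f i < nc"
    and zero: "\<And>i j. r \<le> i \<Longrightarrow> i < nr \<Longrightarrow> j < nc \<Longrightarrow> R $$ (i, j) = 0"
    using row_echelon_zero_rows[OF R f] by blast
  have "A = Q * R" using RPA QP P Q A by (simp flip: assoc_mult_mat)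
  also have "\<dots> = first_cols r Q * first_rows r R" by (rule mult_first_cols_first_rows[OF Q R r zero])
  finally have ABC: "A = first_cols r Q * first_rows r R" .
  have "first_cols r Q \<in> carrier_mat nr r" "first_rows r R \<in> carrier_mat r nc"
    using Q R by (auto simp: first_cols_def first_rows_def)
  from that[OF this ABC first_cols_mult_vec_eq_0[OF Q P PQ r]
      transpose_first_rows_mult_vec_eq_0[OF R f r piv]]
  show ?thesis .
qed

lemma is_pinv_pinv: "is_pinv A (pinv A)"
proof -
  have A: "A \<in> carrier_mat (dim_row A) (dim_col A)" by simp
  have "\<exists>P. is_pinv A P"
  proof (rule full_rank_factorization[OF A])
    fix B r C
    assume B: "B \<in> carrier_mat (dim_row A) r" and C: "C \<in> carrier_mat r (dim_col A)"
      and ABC: "A = B * C"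
      and inj_B: "\<And>v. v \<in> carrier_vec r \<Longrightarrow> B *\<^sub>v v = 0\<^sub>v (dim_row A) \<Longrightarrow> v = 0\<^sub>v r"
      and inj_Ct: "\<And>v. v \<in> carrier_vec r \<Longrightarrow> C\<^sup>T *\<^sub>v v = 0\<^sub>v (dim_col A) \<Longrightarrow> v = 0\<^sub>v r"
    show "\<exists>P. is_pinv A P" unfolding ABC by (rule is_pinv_exists_full_rank[OF B C inj_B inj_Ct])
  qed
  then have "\<exists>!B. is_pinv A B" using is_pinv_unique[OF A] by blast
  then show ?thesis unfolding pinv_def by (rule theI')
qed

lemma pinv_carrier: "A \<in> carrier_mat n d \<Longrightarrow> pinv A \<in> carrier_mat d n"
  using is_pinv_pinv[of A] by (auto simp: is_pinv_def)

lemma pinv_mult_projection: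
  assumes A: "A \<in> carrier_mat n d"
  shows "pinv A * A \<in> carrier_mat d d" "(pinv A * A)\<^sup>T = pinv A * A"
    "pinv A * A * (pinv A * A) = pinv A * A" "A * (pinv A * A) = A"
proof -
  have Ap: "pinv A \<in> carrier_mat d n" using pinv_carrier[OF A] .
  have pinv: "A * pinv A * A = A" "pinv A * A * pinv A = pinv A" "(pinv A * A)\<^sup>T = pinv A * A"
    using is_pinv_pinv[of A] by (auto simp: is_pinv_def)
  show "pinv A * A \<in> carrier_mat d d" "(pinv A * A)\<^sup>T = pinv A * A" using Ap A pinv by auto
  show "pinv A * A * (pinv A * A) = pinv A * A"
    using assoc_mult_mat[of "pinv A * A" d d "pinv A" n A d] Ap A pinv by simp
  show "A * (pinv A * A) = A" using assoc_mult_mat[OF A Ap A] pinv by simp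
qed

section \<open>The minimum-norm solution\<close>

lemma pinv_mult_min_norm:
  fixes M :: "real mat"
  assumes M: "M \<in> carrier_mat N d" and w: "w \<in> carrier_vec d"
  defines "u \<equiv> (pinv M * M) *\<^sub>v w"
  shows "u \<in> carrier_vec d" "M *\<^sub>v u = M *\<^sub>v w"
    "\<And>v. v \<in> carrier_vec d \<Longrightarrow> M *\<^sub>v v = M *\<^sub>v w \<Longrightarrow> sqnorm v = sqnorm u + sqnorm (v - u)"
proof -
  note Pi = pinv_mult_projection[OF M]
  show "u \<in> carrier_vec d" unfolding u_def using Pi(1) w by simp
  show "M *\<^sub>v u = M *\<^sub>v w" unfolding u_def using Pi M w by (simp flip: assoc_mult_mat_vec)
  fix v assume v: "v \<in> carrier_vec d" and Mv: "M *\<^sub>v v = M *\<^sub>v w"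
  have "(pinv M * M) *\<^sub>v v = u" unfolding u_def using Mv pinv_carrier[OF M] M v w by simp
  then show "sqnorm v = sqnorm u + sqnorm (v - u)"
    using sqnorm_orthogonal_projection[OF Pi(1-3) v] by simp
qed

lemma mult_mat_vec_eq_iff_rows:
  "A *\<^sub>v v = A *\<^sub>v w \<longleftrightarrow> (\<forall>r\<in>set (Matrix.rows A). r \<bullet> v = r \<bullet> w)"
  by (auto simp: Matrix.vec_eq_iff Matrix.rows_def)

definition stack_mat :: "nat \<Rightarrow> nat \<Rightarrow> (nat \<Rightarrow> real mat) \<Rightarrow> real mat" where
  "stack_mat d T X = Matrix.mat_of_rows d (concat (map (\<lambda>m. Matrix.rows (X m)) [1..<Suc T]))"

lemma stack_mat_carrier: "stack_mat d T X \<in> carrier_mat (dim_row (stack_mat d T X)) d"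
  unfolding stack_mat_def by simp

lemma stack_mat_mult_eq_iff:
  assumes "\<And>m. m \<in> {1..T} \<Longrightarrow> dim_col (X m) = d"
  shows "stack_mat d T X *\<^sub>v v = stack_mat d T X *\<^sub>v w \<longleftrightarrow> (\<forall>m\<in>{1..T}. X m *\<^sub>v v = X m *\<^sub>v w)"
proof -
  have "set [1..<Suc T] = {1..T}" by auto
  then have rows: "set (concat (map (\<lambda>m. Matrix.rows (X m)) [1..<Suc T]))
      = (\<Union>m\<in>{1..T}. set (Matrix.rows (X m)))"
    by simp
  also have "\<dots> \<subseteq> carrier_vec d" using assms rows_carrier by fastforce
  finally show ?thesis
    unfolding stack_mat_def mult_mat_vec_eq_iff_rows[of "Matrix.mat_of_rows _ _"] mult_mat_vec_eq_iff_rows[of "X _"]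
    using rows by simp
qed

section \<open>Expectations over finitely supported distributions\<close>

lemma expectation_mono_finite_pmf:
  fixes f g :: "'a \<Rightarrow> real"
  assumes "finite (set_pmf M)" and "\<And>x. x \<in> set_pmf M \<Longrightarrow> f x \<le> g x"
  shows "measure_pmf.expectation M f \<le> measure_pmf.expectation M g"
  using assms by (intro integral_mono_AE) (auto simp: AE_measure_pmf_iff integrable_measure_pmf_finite)

lemma expectation_cong_pmf:
  fixes f g :: "'a \<Rightarrow> real"
  assumes "\<And>x. x \<in> set_pmf M \<Longrightarrow> f x = g x"
  shows "measure_pmf.expectation M f = measure_pmf.expectation M g"
  using assms by (intro integral_cong_AE) (auto simp: AE_measure_pmf_iff)

lemma expectation_pair_pmf_finite:
  fixes h :: "'a \<times> 'b \<Rightarrow> real"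
  assumes U: "finite (set_pmf U)" and Q: "finite (set_pmf Q)"
  shows "measure_pmf.expectation (pair_pmf U Q) h
       = measure_pmf.expectation Q (\<lambda>b. measure_pmf.expectation U (\<lambda>a. h (a, b)))"
proof -
  have "measure_pmf.expectation (pair_pmf U Q) h
      = (\<Sum>x\<in>set_pmf U \<times> set_pmf Q. h x * (pmf U (fst x) * pmf Q (snd x)))"
    using U Q by (subst integral_measure_pmf_real) (auto intro!: sum.cong simp: pmf_pair split: prod.splits)
  also have "\<dots> = (\<Sum>a\<in>set_pmf U. \<Sum>b\<in>set_pmf Q. h (a, b) * (pmf U a * pmf Q b))"
    by (simp add: sum.cartesian_product case_prod_beta)
  also have "\<dots> = (\<Sum>b\<in>set_pmf Q. (\<Sum>a\<in>set_pmf U. h (a, b) * pmf U a) * pmf Q b)"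
    by (subst sum.swap) (simp add: sum_distrib_left sum_distrib_right algebra_simps)
  also have "\<dots> = measure_pmf.expectation Q (\<lambda>b. measure_pmf.expectation U (\<lambda>a. h (a, b)))"
    using U Q by (simp add: integral_measure_pmf_real[of "set_pmf _"])
  finally show ?thesis .
qed

lemma expectation_Pi_pmf_component:
  fixes F :: "'b \<Rightarrow> ('a \<Rightarrow> 'b) \<Rightarrow> real"
  assumes A: "finite A" and i: "i \<in> A" and fin: "\<And>j. j \<in> A \<Longrightarrow> finite (set_pmf (p j))"
    and indep: "\<And>j \<tau> z. F j (\<tau>(i := z)) = F j \<tau>"
  shows "measure_pmf.expectation (Pi_pmf A dflt p) (\<lambda>\<tau>. F (\<tau> i) \<tau>)
       = measure_pmf.expectation (Pi_pmf A dflt p) (\<lambda>\<tau>. measure_pmf.expectation (p i) (\<lambda>j. F j \<tau>))"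
proof -
  define Q where "Q = Pi_pmf (A - {i}) dflt p"
  have Pi: "Pi_pmf A dflt p = map_pmf (\<lambda>(z, \<tau>). \<tau>(i := z)) (pair_pmf (p i) Q)"
    unfolding Q_def using A i Pi_pmf_insert[of "A - {i}" i dflt p] by (simp add: insert_absorb)
  have "finite (set_pmf Q)" unfolding Q_def using A fin by (auto simp: set_Pi_pmf)
  then have "measure_pmf.expectation (pair_pmf (p i) Q) (\<lambda>x. F (fst x) (snd x))
      = measure_pmf.expectation (pair_pmf (p i) Q) (\<lambda>x. measure_pmf.expectation (p i) (\<lambda>j. F j (snd x)))"
    using expectation_pair_pmf_finite[of "p i" Q] fin i by simp
  then show ?thesis unfolding Pi by (simp add: split_beta indep)
qed

section \<open>Randomized Kaczmarz on a consistent system\<close>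

locale consistent_tasks =
  fixes d T :: nat and X :: "nat \<Rightarrow> real mat" and y :: "nat \<Rightarrow> real Matrix.vec"
  assumes in_S: "in_S d T X y" and T_pos: "T \<ge> 1"
begin

abbreviation ws :: "real Matrix.vec" where "ws \<equiv> wstar d T X y"

abbreviation err :: "(nat \<Rightarrow> nat) \<Rightarrow> nat \<Rightarrow> real Matrix.vec" where
  "err \<tau> t \<equiv> iter d X y \<tau> t - ws"

abbreviation proj :: "nat \<Rightarrow> real mat" where "proj m \<equiv> pinv (X m) * X m"

definition avg_proj_sqnorm :: "real Matrix.vec \<Rightarrow> real" where
  "avg_proj_sqnorm v = (1 / real T) * (\<Sum>m=1..T. sqnorm (proj m *\<^sub>v v))"

definition admissible :: "(nat \<Rightarrow> nat) \<Rightarrow> bool" where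
  "admissible \<tau> \<longleftrightarrow> (\<forall>t. \<tau> t \<in> {1..T})"

lemma task_carrier:
  assumes m: "m \<in> {1..T}"
  shows "X m \<in> carrier_mat (dim_row (X m)) d" "y m \<in> carrier_vec (dim_row (X m))"
    "spec_norm (X m) \<le> 1"
proof -
  have "\<forall>m\<in>{1..T}. dim_col (X m) = d \<and> dim_vec (y m) = dim_row (X m)"
    using in_S unfolding in_S_def by blast
  then show "X m \<in> carrier_mat (dim_row (X m)) d" "y m \<in> carrier_vec (dim_row (X m))"
    using m unfolding carrier_mat_def carrier_vec_def by auto
  show "spec_norm (X m) \<le> 1" using in_S m unfolding in_S_def by auto
qed

lemmas proj_projection = pinv_mult_projection[OF task_carrier(1)]

lemma kerproj_complement: "m \<in> {1..T} \<Longrightarrow> 1\<^sub>m d - kerproj (X m) = proj m"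
  using proj_projection(1)[of m] task_carrier(1)[of m] by (intro eq_matI) (auto simp: kerproj_def)

lemma wstar_solution:
  shows "ws \<in> carrier_vec d" "\<And>m. m \<in> {1..T} \<Longrightarrow> X m *\<^sub>v ws = y m" "sqnorm ws \<le> 1"
proof -
  obtain w where w: "w \<in> carrier_vec d" "sqrt (sqnorm w) \<le> 1" "\<forall>m\<in>{1..T}. X m *\<^sub>v w = y m"
    using conjunct2[OF in_S[unfolded in_S_def]] by blast
  define M where "M = stack_mat d T X"
  define u where "u = (pinv M * M) *\<^sub>v w"
  have M: "M \<in> carrier_mat (dim_row M) d" unfolding M_def by (rule stack_mat_carrier)
  have solves: "(\<forall>m\<in>{1..T}. X m *\<^sub>v v = y m) \<longleftrightarrow> M *\<^sub>v v = M *\<^sub>v w" for v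
    unfolding M_def using stack_mat_mult_eq_iff[of T X d v w] task_carrier(1) w(3) by auto
  note min_norm = pinv_mult_min_norm[OF M w(1), folded u_def]
  have u_solves: "\<forall>m\<in>{1..T}. X m *\<^sub>v u = y m" using min_norm(2) solves by simp
  have pythagoras: "sqnorm v = sqnorm u + sqnorm (v - u)"
    if "v \<in> carrier_vec d" "\<forall>m\<in>{1..T}. X m *\<^sub>v v = y m" for v
    using min_norm(3) that solves by blast
  have u_min: "sqnorm u \<le> sqnorm v" if "v \<in> carrier_vec d" "\<forall>m\<in>{1..T}. X m *\<^sub>v v = y m" for v
    using pythagoras[OF that] sqnorm_nonneg[of "v - u"] by linarith
  have "ws = u" unfolding wstar_def
  proof (rule the_equality)
    show "u \<in> carrier_vec d \<and> (\<forall>m\<in>{1..T}. X m *\<^sub>v u = y m) \<and>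
      (\<forall>v\<in>carrier_vec d. (\<forall>m\<in>{1..T}. X m *\<^sub>v v = y m) \<longrightarrow> sqnorm u \<le> sqnorm v)"
      using min_norm(1) u_solves u_min by blast
  next
    fix v assume v: "v \<in> carrier_vec d \<and> (\<forall>m\<in>{1..T}. X m *\<^sub>v v = y m) \<and>
      (\<forall>v'\<in>carrier_vec d. (\<forall>m\<in>{1..T}. X m *\<^sub>v v' = y m) \<longrightarrow> sqnorm v \<le> sqnorm v')"
    then have "sqnorm (v - u) = 0"
      using pythagoras[of v] min_norm(1) u_solves sqnorm_nonneg[of "v - u"] by fastforce
    then have "v - u = 0\<^sub>v d" using sqnorm_eq_0_iff[of "v - u" d] min_norm(1) v by simp
    then show "v = u" using min_norm(1) v by (auto simp: Matrix.vec_eq_iff)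
  qed
  then show "ws \<in> carrier_vec d" "\<And>m. m \<in> {1..T} \<Longrightarrow> X m *\<^sub>v ws = y m"
    using min_norm(1) u_solves by auto
  show "sqnorm ws \<le> 1" using \<open>ws = u\<close> u_min[OF w(1) w(3)] w(2) by simp
qed

lemma iter_carrier:
  assumes \<tau>: "admissible \<tau>"
  shows "iter d X y \<tau> t \<in> carrier_vec d"
proof (induction t)
  case (Suc t)
  let ?m = "\<tau> (Suc t)" and ?w = "iter d X y \<tau> t"
  have "?m \<in> {1..T}" using \<tau> unfolding admissible_def by blast
  note Xm = task_carrier(1,2)[OF this]
  have "y ?m - X ?m *\<^sub>v ?w \<in> carrier_vec (dim_row (X ?m))"
    using minus_carrier_vec[OF Xm(2) mult_mat_vec_carrier[OF Xm(1) Suc.IH]] .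
  then have "pinv (X ?m) *\<^sub>v (y ?m - X ?m *\<^sub>v ?w) \<in> carrier_vec d"
    using mult_mat_vec_carrier[OF pinv_carrier[OF Xm(1)]] by blast
  then show ?case using add_carrier_vec[OF Suc.IH] by simp
qed simp

lemma iter_cong: "(\<And>s. 1 \<le> s \<Longrightarrow> s \<le> t \<Longrightarrow> \<tau> s = \<tau>' s) \<Longrightarrow> iter d X y \<tau> t = iter d X y \<tau>' t"
  by (induction t) auto

lemma err_Suc:
  assumes \<tau>: "admissible \<tau>"
  shows "err \<tau> (Suc t) = err \<tau> t - proj (\<tau> (Suc t)) *\<^sub>v err \<tau> t"
proof -
  let ?m = "\<tau> (Suc t)" and ?w = "iter d X y \<tau> t"
  have m: "?m \<in> {1..T}" using \<tau> unfolding admissible_def by blast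
  have Xm: "X ?m \<in> carrier_mat (dim_row (X ?m)) d" and w: "?w \<in> carrier_vec d"
    and P: "proj ?m \<in> carrier_mat d d"
    using task_carrier(1)[OF m] iter_carrier[OF \<tau>] proj_projection(1)[OF m] .
  have "y ?m - X ?m *\<^sub>v ?w = X ?m *\<^sub>v (ws - ?w)"
    using mult_minus_distrib_mat_vec[OF Xm wstar_solution(1) w] wstar_solution(2)[OF m] by simp
  then have "pinv (X ?m) *\<^sub>v (y ?m - X ?m *\<^sub>v ?w) = proj ?m *\<^sub>v (ws - ?w)"
    using assoc_mult_mat_vec[OF pinv_carrier[OF Xm] Xm, of "ws - ?w"] w wstar_solution(1) by simp
  also have "\<dots> = proj ?m *\<^sub>v ws - proj ?m *\<^sub>v ?w"
    using mult_minus_distrib_mat_vec[OF P wstar_solution(1) w] .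
  finally have step: "pinv (X ?m) *\<^sub>v (y ?m - X ?m *\<^sub>v ?w) = proj ?m *\<^sub>v ws - proj ?m *\<^sub>v ?w" .
  have rearrange: "a + (b - c) - z = (a - z) - (c - b)"
    if "a \<in> carrier_vec d" "b \<in> carrier_vec d" "c \<in> carrier_vec d" "z \<in> carrier_vec d"
    for a b c z :: "real Matrix.vec"
    using that by (intro eq_vecI) auto
  show ?thesis
    unfolding iter.simps step mult_minus_distrib_mat_vec[OF P w wstar_solution(1)]
    by (rule rearrange) (use P w wstar_solution(1) in auto)
qed

lemma sqnorm_err_Suc:
  assumes \<tau>: "admissible \<tau>"
  shows "sqnorm (err \<tau> t) = sqnorm (err \<tau> (Suc t)) + sqnorm (proj (\<tau> (Suc t)) *\<^sub>v err \<tau> t)"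
proof -
  have "\<tau> (Suc t) \<in> {1..T}" using \<tau> unfolding admissible_def by auto
  then show ?thesis
    using sqnorm_orthogonal_projection[OF proj_projection(1-3), of "\<tau> (Suc t)" "err \<tau> t"] err_Suc[OF \<tau>]
      iter_carrier[OF \<tau>] wstar_solution(1) by simp
qed

lemma residual_le:
  assumes m: "m \<in> {1..T}" and w: "w \<in> carrier_vec d"
  shows "sqnorm (X m *\<^sub>v w - y m) \<le> sqnorm (proj m *\<^sub>v (w - ws))"
proof -
  have Xm: "X m \<in> carrier_mat (dim_row (X m)) d" by (rule task_carrier(1)[OF m])
  have "X m *\<^sub>v w - y m = X m *\<^sub>v (w - ws)"
    using mult_minus_distrib_mat_vec[OF Xm w wstar_solution(1)] wstar_solution(2)[OF m] by simp
  also have "\<dots> = X m *\<^sub>v (proj m *\<^sub>v (w - ws))"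
    using proj_projection(1,4)[OF m] Xm w wstar_solution(1) by (simp flip: assoc_mult_mat_vec)
  finally have "sqrt (sqnorm (X m *\<^sub>v w - y m)) \<le> spec_norm (X m) * sqrt (sqnorm (proj m *\<^sub>v (w - ws)))"
    using sqrt_sqnorm_mult_mat_vec_le[OF Xm, of "proj m *\<^sub>v (w - ws)"] proj_projection(1)[OF m] w wstar_solution(1)
    by simp
  also have "\<dots> \<le> 1 * sqrt (sqnorm (proj m *\<^sub>v (w - ws)))"
    using task_carrier(3)[OF m] sqnorm_nonneg by (intro mult_right_mono) auto
  finally show ?thesis by simp
qed

lemma avg_proj_sqnorm_le:
  assumes v: "v \<in> carrier_vec d"
  shows "avg_proj_sqnorm v \<le> sqnorm v"
proof -
  have "(\<Sum>m=1..T. sqnorm (proj m *\<^sub>v v)) \<le> (\<Sum>m=1..T. sqnorm v)"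
    using sqnorm_orthogonal_projection_le[OF proj_projection(1-3) v] by (intro sum_mono) auto
  then show ?thesis using T_pos by (simp add: avg_proj_sqnorm_def field_simps)
qed

lemma kerproj_sum_eq_avg_proj_sqnorm:
  "(1 / real T) * (\<Sum>m=1..T. sqnorm ((1\<^sub>m d - kerproj (X m)) *\<^sub>v v)) = avg_proj_sqnorm v"
  by (simp add: avg_proj_sqnorm_def kerproj_complement)

lemma avg_proj_sqnorm_mean_vec_le:
  assumes a: "\<And>t. t \<in> I \<Longrightarrow> a t \<in> carrier_vec d"
  shows "avg_proj_sqnorm (mean_vec d I a) \<le> (\<Sum>t\<in>I. avg_proj_sqnorm (a t)) / real (card I)"
proof -
  have "sqnorm (proj m *\<^sub>v mean_vec d I a) \<le> (\<Sum>t\<in>I. sqnorm (proj m *\<^sub>v a t)) / real (card I)"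
    if m: "m \<in> {1..T}" for m
  proof -
    have "proj m *\<^sub>v mean_vec d I a = mean_vec d I (\<lambda>t. proj m *\<^sub>v a t)"
      by (rule mult_mat_vec_mean_vec[OF proj_projection(1)[OF m]]) (rule a)
    moreover have "proj m *\<^sub>v a t \<in> carrier_vec d" if "t \<in> I" for t
      using proj_projection(1)[OF m] a[OF that] by simp
    ultimately show ?thesis using sqnorm_mean_vec_le[of I "\<lambda>t. proj m *\<^sub>v a t" d] by simp
  qed
  then have "avg_proj_sqnorm (mean_vec d I a)
      \<le> (1 / real T) * (\<Sum>m=1..T. (\<Sum>t\<in>I. sqnorm (proj m *\<^sub>v a t)) / real (card I))"
    unfolding avg_proj_sqnorm_def by (intro mult_left_mono sum_mono) auto
  also have "\<dots> = (\<Sum>t\<in>I. avg_proj_sqnorm (a t)) / real (card I)"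
    unfolding avg_proj_sqnorm_def
    by (simp add: sum_divide_distrib sum_distrib_left algebra_simps) (rule sum.swap)
  finally show ?thesis .
qed

lemma wbar_minus_wstar:
  assumes \<tau>: "admissible \<tau>" and k: "k \<ge> 1"
  shows "wbar d X y \<tau> k - ws = mean_vec d {1..k} (err \<tau>)"
proof -
  have iters: "(\<lambda>t. iter d X y \<tau> t) \<in> {1..k} \<rightarrow> carrier_vec d" using iter_carrier[OF \<tau>] by auto
  show ?thesis
  proof (rule eq_vecI)
    fix i assume "i < dim_vec (mean_vec d {1..k} (err \<tau>))"
    then have i: "i < d" by (simp add: mean_vec_def)
    have "(wbar d X y \<tau> k - ws) $ i = (\<Sum>t\<in>{1..k}. iter d X y \<tau> t $ i) / real k - ws $ i"
      unfolding wbar_def using i wstar_solution(1) index_finsum_vec[OF _ i iters] finsum_vec_closed[OF iters]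
      by simp
    also have "\<dots> = (\<Sum>t\<in>{1..k}. err \<tau> t $ i) / real k"
      using i k wstar_solution(1) iter_carrier[OF \<tau>] by (simp add: sum_subtractf field_simps)
    finally show "(wbar d X y \<tau> k - ws) $ i = mean_vec d {1..k} (err \<tau>) $ i"
      using i by (simp add: mean_vec_def)
  qed (use wstar_solution(1) finsum_vec_closed[OF iters] in \<open>simp add: wbar_def mean_vec_def\<close>)
qed

lemma wbar_carrier: "admissible \<tau> \<Longrightarrow> wbar d X y \<tau> k \<in> carrier_vec d"
  unfolding wbar_def using finsum_vec_closed[of "iter d X y \<tau>" "{1..k}" d] iter_carrier by auto

lemma tau_pmf_finite: "finite (set_pmf (tau_pmf T k))"
  unfolding tau_pmf_def using T_pos by (auto simp: set_Pi_pmf)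

lemma tau_pmf_admissible:
  assumes "\<tau> \<in> set_pmf (tau_pmf T k)"
  shows "admissible \<tau>"
proof -
  have "\<tau> \<in> PiE_dflt {1..k} 1 (\<lambda>_. {1..T})"
    using assms T_pos by (simp add: tau_pmf_def set_Pi_pmf o_def)
  then have "\<tau> t \<in> {1..T}" for t
    using T_pos unfolding PiE_dflt_def by (cases "t \<in> {1..k}") auto
  then show ?thesis unfolding admissible_def by blast
qed

text \<open>The index \<open>\<tau> (t + 1)\<close> is independent of \<open>err \<tau> t\<close>, so the projection term of
  \<open>sqnorm_err_Suc\<close> averages to \<open>avg_proj_sqnorm (err \<tau> t)\<close>.\<close>

lemma expectation_avg_proj_sqnorm_err:
  assumes "Suc t \<le> k"
  shows "measure_pmf.expectation (tau_pmf T k) (\<lambda>\<tau>. avg_proj_sqnorm (err \<tau> t))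
    = measure_pmf.expectation (tau_pmf T k) (\<lambda>\<tau>. sqnorm (err \<tau> t))
      - measure_pmf.expectation (tau_pmf T k) (\<lambda>\<tau>. sqnorm (err \<tau> (Suc t)))"
proof -
  let ?E = "measure_pmf.expectation (tau_pmf T k)"
  define F where "F m \<tau> = sqnorm (proj m *\<^sub>v err \<tau> t)" for m \<tau>
  have indep: "F m (\<tau>(Suc t := z)) = F m \<tau>" for m \<tau> z
    unfolding F_def using iter_cong[of t "\<tau>(Suc t := z)" \<tau>] by simp
  have "?E (\<lambda>\<tau>. avg_proj_sqnorm (err \<tau> t))
      = ?E (\<lambda>\<tau>. measure_pmf.expectation (pmf_of_set {1..T}) (\<lambda>m. F m \<tau>))"
    using T_pos by (simp add: integral_pmf_of_set avg_proj_sqnorm_def F_def)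
  also have "\<dots> = ?E (\<lambda>\<tau>. F (\<tau> (Suc t)) \<tau>)"
    unfolding tau_pmf_def using assms T_pos
    by (intro expectation_Pi_pmf_component[symmetric] indep) auto
  also have "\<dots> = ?E (\<lambda>\<tau>. sqnorm (err \<tau> t) - sqnorm (err \<tau> (Suc t)))"
  proof (rule expectation_cong_pmf)
    fix \<tau> assume "\<tau> \<in> set_pmf (tau_pmf T k)"
    then show "F (\<tau> (Suc t)) \<tau> = sqnorm (err \<tau> t) - sqnorm (err \<tau> (Suc t))"
      using sqnorm_err_Suc[OF tau_pmf_admissible, of \<tau> k t] by (simp add: F_def)
  qed
  also have "\<dots> = ?E (\<lambda>\<tau>. sqnorm (err \<tau> t)) - ?E (\<lambda>\<tau>. sqnorm (err \<tau> (Suc t)))"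
    using tau_pmf_finite by (simp add: integrable_measure_pmf_finite)
  finally show ?thesis .
qed

lemma sum_expectation_avg_proj_sqnorm_err_le:
  assumes k: "k \<ge> 1"
  shows "(\<Sum>t\<in>{1..k}. measure_pmf.expectation (tau_pmf T k) (\<lambda>\<tau>. avg_proj_sqnorm (err \<tau> t))) \<le> 1"
proof -
  let ?E = "measure_pmf.expectation (tau_pmf T k)"
  define s where "s t = ?E (\<lambda>\<tau>. sqnorm (err \<tau> t))" for t
  define b where "b t = ?E (\<lambda>\<tau>. avg_proj_sqnorm (err \<tau> t))" for t
  note fin = tau_pmf_finite[of k] and adm = tau_pmf_admissible[of _ k]
  have "(\<Sum>t\<in>{1..<k}. b t) = (\<Sum>t\<in>{1..<k}. s t - s (Suc t))"
    by (intro sum.cong) (auto simp: b_def s_def expectation_avg_proj_sqnorm_err)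
  also have "\<dots> = - (\<Sum>t\<in>{1..<k}. s (Suc t) - s t)" by (simp add: sum_subtractf)
  also have "\<dots> = s 1 - s k" using sum_Suc_diff'[of 1 k s] k by simp
  finally have telescope: "(\<Sum>t\<in>{1..<k}. b t) = s 1 - s k" .
  have "b k \<le> s k"
    unfolding b_def s_def using fin iter_carrier[OF adm] wstar_solution(1)
    by (intro expectation_mono_finite_pmf avg_proj_sqnorm_le) auto
  moreover have "s 1 \<le> ?E (\<lambda>\<tau>. 1)"
    unfolding s_def
  proof (intro expectation_mono_finite_pmf[OF fin])
    fix \<tau> assume "\<tau> \<in> set_pmf (tau_pmf T k)"
    moreover have "err \<tau> 0 = (- 1) \<cdot>\<^sub>v ws" using wstar_solution(1) by auto
    ultimately show "sqnorm (err \<tau> 1) \<le> 1"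
      using sqnorm_err_Suc[OF adm, of \<tau> 0] wstar_solution(3) sqnorm_nonneg[of "proj (\<tau> 1) *\<^sub>v err \<tau> 0"]
      by (simp add: sqnorm_smult)
  qed
  ultimately show ?thesis
    using telescope k unfolding b_def[symmetric]
    by (simp add: atLeastLessThanSuc_atLeastAtMost[symmetric] le_iff_add)
qed

lemma expectation_avg_proj_sqnorm_wbar_le:
  assumes k: "k \<ge> 1"
  shows "measure_pmf.expectation (tau_pmf T k) (\<lambda>\<tau>. avg_proj_sqnorm (wbar d X y \<tau> k - ws))
    \<le> 1 / real k"
proof -
  let ?E = "measure_pmf.expectation (tau_pmf T k)"
  note fin = tau_pmf_finite[of k] and adm = tau_pmf_admissible[of _ k]
  have "?E (\<lambda>\<tau>. avg_proj_sqnorm (wbar d X y \<tau> k - ws))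
      \<le> ?E (\<lambda>\<tau>. (\<Sum>t\<in>{1..k}. avg_proj_sqnorm (err \<tau> t)) / real k)"
  proof (rule expectation_mono_finite_pmf[OF fin])
    fix \<tau> assume \<tau>: "\<tau> \<in> set_pmf (tau_pmf T k)"
    have "err \<tau> t \<in> carrier_vec d" for t using iter_carrier[OF adm[OF \<tau>]] wstar_solution(1) by simp
    then show "avg_proj_sqnorm (wbar d X y \<tau> k - ws) \<le> (\<Sum>t\<in>{1..k}. avg_proj_sqnorm (err \<tau> t)) / real k"
      using avg_proj_sqnorm_mean_vec_le[of "{1..k}" "err \<tau>"] wbar_minus_wstar[OF adm[OF \<tau>] k] by simp
  qed
  also have "\<dots> = (\<Sum>t\<in>{1..k}. ?E (\<lambda>\<tau>. avg_proj_sqnorm (err \<tau> t))) / real k"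
    using fin by (simp add: integrable_measure_pmf_finite)
  also have "\<dots> \<le> 1 / real k"
    using sum_expectation_avg_proj_sqnorm_err_le[OF k] by (simp add: divide_right_mono)
  finally show ?thesis .
qed

lemma expectation_residual_le:
  "measure_pmf.expectation (tau_pmf T k)
      (\<lambda>\<tau>. (1 / real T) * (\<Sum>m=1..T. sqnorm (X m *\<^sub>v wbar d X y \<tau> k - y m)))
    \<le> measure_pmf.expectation (tau_pmf T k) (\<lambda>\<tau>. avg_proj_sqnorm (wbar d X y \<tau> k - ws))"
  unfolding avg_proj_sqnorm_def
  using tau_pmf_finite tau_pmf_admissible residual_le wbar_carrier
  by (intro expectation_mono_finite_pmf mult_left_mono sum_mono) auto

end

theorem mainTheorem18:
  fixes d T :: nat and X :: "nat \<Rightarrow> real mat" and y :: "nat \<Rightarrow> real Matrix.vec"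
  assumes "d \<ge> 1" and "T \<ge> 1" and "in_S d T X y"
  shows "\<forall>k\<ge>1.
    measure_pmf.expectation (tau_pmf T k)
      (\<lambda>\<tau>. (1 / real T) * (\<Sum>m=1..T. sqnorm (X m *\<^sub>v wbar d X y \<tau> k - y m)))
    \<le> measure_pmf.expectation (tau_pmf T k)
      (\<lambda>\<tau>. (1 / real T) * (\<Sum>m=1..T.
         sqnorm ((1\<^sub>m d - kerproj (X m)) *\<^sub>v (wbar d X y \<tau> k - wstar d T X y))))
    \<and> measure_pmf.expectation (tau_pmf T k)
      (\<lambda>\<tau>. (1 / real T) * (\<Sum>m=1..T.
         sqnorm ((1\<^sub>m d - kerproj (X m)) *\<^sub>v (wbar d X y \<tau> k - wstar d T X y))))
    \<le> 1 / real k"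
proof -
  interpret consistent_tasks d T X y using assms(2,3) by unfold_locales
  show ?thesis
    unfolding kerproj_sum_eq_avg_proj_sqnorm
    using expectation_residual_le expectation_avg_proj_sqnorm_wbar_le by simp
qed

end
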